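(* Fix $\varepsilon>0$, $\delta\in(0,1)$, an even integer $d>4(e^{2\varepsilon}-1)^2\ln(12e^{\varepsilon}n/\delta)$, and $\varepsilon$-private randomizers $R_1,\dots,R_n:[d]\to\mathcal Y$. If $H$ is chosen uniformly among subsets of $[d]$ of size $d/2$, then with probability greater than $2/3$ over $H$, every randomizer $Q_{H,R_i}$, $i\in[n]$, is $(\varepsilon',\delta)$-private, where \[ \varepsilon'=(e^{2\varepsilon}-1)\sqrt{\frac{16}{d}\ln\left(24e^{\varepsilon}n/\delta\right)} . \]
   Context: $\mathcal Y$ is a countable message set. A randomizer $R:\mathcal X\to\mathcal Y$ is $(\varepsilon,\delta)$-private if for all $x,x'\in\mathcal X$ and all $Y\subseteq\mathcal Y$, $\Pr[R(x)\in Y]\le e^{\varepsilon}\Pr[R(x')\in Y]+\delta$; it is $\varepsilon$-private if this holds with $\delta=0$. $\mathbf U_H$ is the uniform distribution on $H\subseteq[d]$, $\overline H=[d]\setminus H$, and $R(\mathbf U_H)$ is the distribution of $R(\hat x)$ with $\hat x\sim\mathbf U_H$. For $H\subset[d]$ with $|H|=d/2$ and a randomizer $R:[d]\to\mathcal Y$, $Q_{H,R}:\{\pm1\}\to\mathcal Y$ is the randomizer that on input $+1$ outputs a sample of $R(\mathbf U_H)$ and on input $-1$ outputs a sample of $R(\mathbf U_{\overline H})$. *)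

theory Defs
  imports "HOL-Probability.Probability"
begin

definition private_randomizer ::
  "'x set \<Rightarrow> ('x \<Rightarrow> 'y::countable pmf) \<Rightarrow> real \<Rightarrow> real \<Rightarrow> bool" where
  "private_randomizer X R eps delta \<longleftrightarrow>
     (\<forall>x\<in>X. \<forall>x'\<in>X. \<forall>Y::'y set.
        measure_pmf.prob (R x) Y \<le> exp eps * measure_pmf.prob (R x') Y + delta)"

definition dset :: "nat \<Rightarrow> nat set" where
  "dset d = {1..d}"

definition rand_uniform :: "nat set \<Rightarrow> (nat \<Rightarrow> 'y pmf) \<Rightarrow> 'y pmf" where
  "rand_uniform H R = bind_pmf (pmf_of_set H) R"

text \<open>Q_{H,R} : {+1,-1} -> Y (inputs are the integers 1 and -1).\<close>
definition Q_rand :: "nat \<Rightarrow> nat set \<Rightarrow> (nat \<Rightarrow> 'y pmf) \<Rightarrow> int \<Rightarrow> 'y pmf" where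
  "Q_rand d H R s = (if s = 1 then rand_uniform H R else rand_uniform (dset d - H) R)"

definition half_subsets :: "nat \<Rightarrow> nat set set" where
  "half_subsets d = {H. H \<subseteq> dset d \<and> card H = d div 2}"

end

theory Submission
  imports Defs
begin

text \<open>Fix an output \<open>y\<close> and let \<open>p x\<close> be the probability that \<open>R\<close> outputs \<open>y\<close> on input \<open>x\<close>.
  Pure \<open>\<epsilon>\<close>-privacy keeps every \<open>p x\<close> within a factor \<open>exp \<epsilon>\<close> of the mean of \<open>p\<close>, and
  \<open>R(U_H)\<close> and \<open>R(U_([d] - H))\<close> give \<open>y\<close> probabilities proportional to the sums of \<open>p\<close> over
  \<open>H\<close> and over its complement.  For a uniform half-subset \<open>H\<close> these sums concentrate around
  half the total: realising \<open>H\<close> as the image under a uniform permutation of a uniform choice of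
  one element from each pair \<open>{2j+1, 2j+2}\<close>, the deviation becomes a Rademacher sum, bounded
  by Hoeffding's argument.  So each \<open>y\<close> has privacy loss above \<open>\<epsilon>'\<close> for only a tiny fraction of
  the \<open>H\<close>.  Averaging over \<open>y\<close> drawn from \<open>R(U_[d])\<close> and applying Markov's inequality, for all
  but a \<open>1/(6n)\<close> fraction of the \<open>H\<close> the high-loss outputs have probability at most \<open>\<delta>\<close> in
  both directions, which is \<open>(\<epsilon>', \<delta>)\<close>-privacy of \<open>Q_{H,R}\<close>.  A union bound over the \<open>n\<close>
  randomizers concludes.\<close>

section \<open>Hoeffding's bound for Rademacher sums\<close>

lemma cosh_le_exp_half_square:
  fixes x :: real
  shows "cosh x \<le> exp (x^2 / 2)"
proof -
  have "cosh y \<le> exp (y^2 / 2)" if "y \<ge> 0" for y :: real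
  proof -
    have "-(2*y) * (1/2) + ln (1 + (1/2) * (exp (2*y) - 1)) \<le> (2*y)^2 / 8"
      using Hoeffdings_lemma_aux[of "2*y" "1/2"] that by simp
    hence "ln ((1 + exp (2*y)) / 2) - y \<le> y^2 / 2"
      by (simp add: power2_eq_square algebra_simps add_divide_distrib)
    moreover have "cosh y = exp (ln ((1 + exp (2*y)) / 2) - y)"
      by (simp add: cosh_field_def exp_diff exp_minus add_pos_pos field_simps flip: exp_add)
    ultimately show ?thesis by simp
  qed
  from this[of x] this[of "-x"] show ?thesis
    by (cases "x \<ge> 0") auto
qed

lemma card_rademacher_sum_gt_le:
  fixes c :: "nat \<Rightarrow> real"
  assumes t: "t > 0" and V: "V > 0" and cV: "(\<Sum>j<k. (c j)^2) \<le> V"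
  shows "real (card {T \<in> Pow {..<k}. t < (\<Sum>j<k. if j \<in> T then c j else - c j)})
           \<le> 2^k * exp (- (t^2) / (2*V))"
proof -
  \<comment> \<open>Chernoff's bound with the optimal exponent \<open>l = t / V\<close>\<close>
  define l where "l = t / V"
  have l: "l > 0" using t V by (simp add: l_def)
  define S where "S T = (\<Sum>j<k. if j \<in> T then c j else - c j)" for T
  define G where "G = {T \<in> Pow {..<k}. t < S T}"
  have "real (card G) * exp (l * t) = (\<Sum>T\<in>G. exp (l * t))" by simp
  also have "\<dots> \<le> (\<Sum>T\<in>G. exp (l * S T))"
    by (intro sum_mono) (use l in \<open>auto simp: G_def\<close>)
  also have "\<dots> \<le> (\<Sum>T\<in>Pow {..<k}. exp (l * S T))"
    by (intro sum_mono2) (auto simp: G_def)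
  also have "\<dots> = (\<Sum>T\<in>Pow {..<k}. (\<Prod>j\<in>T. exp (l * c j)) * (\<Prod>j\<in>{..<k} - T. exp (- (l * c j))))"
  proof (intro sum.cong refl)
    fix T assume T: "T \<in> Pow {..<k}"
    have "exp (l * S T) = (\<Prod>j<k. if j \<in> T then exp (l * c j) else exp (- (l * c j)))"
      unfolding S_def sum_distrib_left by (subst exp_sum) (auto intro!: prod.cong)
    also have "\<dots> = (\<Prod>j\<in>{..<k} \<inter> {j. j \<in> T}. exp (l * c j)) * (\<Prod>j\<in>{..<k} \<inter> - {j. j \<in> T}. exp (- (l * c j)))"
      by (rule prod.If_cases) simp
    also have "{..<k} \<inter> {j. j \<in> T} = T" using T by auto
    also have "{..<k} \<inter> - {j. j \<in> T} = {..<k} - T" by auto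
    finally show "exp (l * S T) = (\<Prod>j\<in>T. exp (l * c j)) * (\<Prod>j\<in>{..<k} - T. exp (- (l * c j)))" .
  qed
  also have "\<dots> = (\<Prod>j<k. exp (l * c j) + exp (- (l * c j)))"
    by (rule prod_add[symmetric]) simp
  also have "\<dots> = (\<Prod>j<k. 2 * cosh (l * c j))"
    by (simp add: cosh_field_def add_divide_distrib)
  also have "\<dots> \<le> (\<Prod>j<k. 2 * exp ((l * c j)^2 / 2))"
    by (intro prod_mono) (use cosh_le_exp_half_square in auto)
  also have "\<dots> = 2^k * exp (l^2 * (\<Sum>j<k. (c j)^2) / 2)"
    by (simp add: prod.distrib exp_sum[symmetric] sum_distrib_left sum_divide_distrib power_mult_distrib)
  also have "\<dots> \<le> 2^k * exp (l^2 * V / 2)"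
    using cV by (intro mult_left_mono) (auto intro!: divide_right_mono mult_left_mono)
  finally have "real (card G) \<le> 2^k * exp (l^2 * V / 2) / exp (l * t)"
    by (simp add: le_divide_eq)
  also have "\<dots> = 2^k * exp (l^2 * V / 2 - l * t)" by (simp add: exp_diff)
  also have "l^2 * V / 2 - l * t = - (t^2) / (2*V)"
    using V by (simp add: l_def power2_eq_square field_simps)
  finally show ?thesis by (simp add: G_def S_def)
qed

section \<open>Concentration of sums over a uniform half-subset\<close>

lemma exists_permutes_image_eq:
  assumes D: "finite D" and H: "H \<subseteq> D" and H': "H' \<subseteq> D" and c: "card H = card H'"
  shows "\<exists>g. g permutes D \<and> g ` H = H'"
proof -
  have fH: "finite H" "finite H'" using D H H' finite_subset by auto
  obtain h1 where h1: "bij_betw h1 H H'" using finite_same_card_bij[OF fH c] by blast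
  have "card (D - H) = card (D - H')"
    using c H H' D fH by (simp add: card_Diff_subset)
  then obtain h2 where h2: "bij_betw h2 (D - H) (D - H')"
    using finite_same_card_bij[of "D - H" "D - H'"] D by blast
  define g where "g x = (if x \<in> H then h1 x else if x \<in> D then h2 x else x)" for x
  have b1: "bij_betw g H H'" using h1 by (rule bij_betw_cong[THEN iffD1, rotated]) (simp add: g_def)
  have b2: "bij_betw g (D - H) (D - H')" using h2 by (rule bij_betw_cong[THEN iffD1, rotated]) (simp add: g_def)
  have "bij_betw g (H \<union> (D - H)) (H' \<union> (D - H'))"
    by (rule bij_betw_combine[OF b1 b2]) auto
  moreover have "H \<union> (D - H) = D" "H' \<union> (D - H') = D" using H H' by auto
  ultimately have "bij_betw g D D" by simp
  hence "g permutes D" by (rule bij_imp_permutes) (use H in \<open>auto simp: g_def\<close>)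
  moreover have "g ` H = H'" using b1 by (simp add: bij_betw_def)
  ultimately show ?thesis by blast
qed

lemma sum_permutes_image:
  fixes f :: "'a set \<Rightarrow> real"
  assumes D: "finite D" and A: "A \<subseteq> D" "card A = m"
  defines "S \<equiv> {H. H \<subseteq> D \<and> card H = m}" and "P \<equiv> {p. p permutes D}"
  shows "(\<Sum>p\<in>P. f (p ` A)) * real (card S) = real (card P) * (\<Sum>H\<in>S. f H)"
proof -
  define F where "F H = {p \<in> P. p ` A = H}" for H
  have finP: "finite P" unfolding P_def using D by (rule finite_permutations)
  have img: "(\<lambda>p. p ` A) ` P = S"
  proof
    show "(\<lambda>p. p ` A) ` P \<subseteq> S"
    proof
      fix H assume "H \<in> (\<lambda>p. p ` A) ` P"
      then obtain p where p: "p permutes D" "H = p ` A" by (auto simp: P_def)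
      have "p ` A \<subseteq> D" using A p permutes_image by blast
      moreover have "card (p ` A) = m"
        using A p by (metis card_image inj_on_subset permutes_inj subset_UNIV)
      ultimately show "H \<in> S" using p by (auto simp: S_def)
    qed
    show "S \<subseteq> (\<lambda>p. p ` A) ` P"
    proof
      fix H assume "H \<in> S"
      then obtain g where "g permutes D" "g ` A = H"
        using exists_permutes_image_eq[OF D A(1), of H] A by (auto simp: S_def)
      thus "H \<in> (\<lambda>p. p ` A) ` P" by (auto simp: P_def)
    qed
  qed
  \<comment> \<open>all fibres \<open>F H\<close> are equinumerous: composing with a permutation taking \<open>H\<close> to \<open>H'\<close>
    injects \<open>F H\<close> into \<open>F H'\<close>\<close>
  have card_le: "card (F H) \<le> card (F H')" if HH': "H \<in> S" "H' \<in> S" for H H'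
  proof -
    obtain g where g: "g permutes D" "g ` H = H'"
      using exists_permutes_image_eq[OF D, of H H'] HH' by (auto simp: S_def)
    have "inj_on ((\<circ>) g) (F H)"
      using permutes_inj[OF g(1)] by (auto simp: inj_on_def fun_eq_iff inj_def)
    moreover have "(\<circ>) g ` F H \<subseteq> F H'"
      using g by (auto simp: F_def P_def image_comp[symmetric] intro: permutes_compose)
    moreover have "finite (F H')" using finP by (simp add: F_def)
    ultimately show ?thesis by (rule card_inj_on_le)
  qed
  have "A \<in> S" using A by (simp add: S_def)
  hence card_F: "card (F H) = card (F A)" if "H \<in> S" for H
    using card_le[OF that] card_le[of A H] that by (simp add: le_antisym)
  have sum_P: "(\<Sum>p\<in>P. g (p ` A)) = real (card (F A)) * (\<Sum>H\<in>S. g H)" for g :: "'a set \<Rightarrow> real"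
  proof -
    have "(\<Sum>p\<in>P. g (p ` A)) = (\<Sum>H\<in>(\<lambda>p. p ` A) ` P. \<Sum>p\<in>F H. g (p ` A))"
      unfolding F_def by (rule sum.image_gen[OF finP])
    also have "\<dots> = (\<Sum>H\<in>S. real (card (F H)) * g H)"
      unfolding img by (intro sum.cong refl) (auto simp: F_def)
    also have "\<dots> = (\<Sum>H\<in>S. real (card (F A)) * g H)"
      by (intro sum.cong refl) (simp add: card_F)
    finally show ?thesis by (simp add: sum_distrib_left)
  qed
  have "real (card P) = real (card (F A)) * real (card S)"
    using sum_P[of "\<lambda>_. 1"] by simp
  thus ?thesis using sum_P[of f] by simp
qed

lemma finite_half_subsets: "finite (half_subsets d)"
  unfolding half_subsets_def dset_def by (auto intro: finite_subset[of _ "Pow {1..d}"])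

lemma card_half_subsets_pos: "card (half_subsets d) > 0"
proof -
  have "{1..d div 2} \<in> half_subsets d" by (auto simp: half_subsets_def dset_def)
  thus ?thesis using finite_half_subsets card_gt_0_iff by blast
qed

lemma half_subsets_Diff:
  assumes "even d" "H \<in> half_subsets d"
  shows "dset d - H \<in> half_subsets d"
proof -
  have H: "H \<subseteq> dset d" "card H = d div 2" using assms(2) by (auto simp: half_subsets_def)
  hence "card (dset d - H) = d - d div 2"
    by (simp add: card_Diff_subset dset_def finite_subset)
  also have "\<dots> = d div 2" using assms(1) by (auto elim: evenE)
  finally show ?thesis by (simp add: half_subsets_def)
qed

lemma bij_betw_Diff_half_subsets:
  assumes "even d"
  shows "bij_betw (\<lambda>H. dset d - H) (half_subsets d) (half_subsets d)"
proof -
  have "H \<subseteq> dset d" if "H \<in> half_subsets d" for H using that by (simp add: half_subsets_def)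
  thus ?thesis
    by (intro bij_betw_byWitness[where f' = "\<lambda>H. dset d - H"]) (use half_subsets_Diff[OF assms] in auto)
qed

definition pair_selection :: "nat \<Rightarrow> nat set \<Rightarrow> nat set" where
  "pair_selection k T = (\<lambda>j. if j \<in> T then 2*j+2 else 2*j+1) ` {..<k}"

lemma inj_on_pair_choice: "inj_on (\<lambda>j. if j \<in> T then 2*j+2 else 2*j+(1::nat)) {..<k}"
  by (auto simp: inj_on_def split: if_splits)

lemma pair_selection_subset_dset: "pair_selection k T \<subseteq> dset (2*k)"
  by (auto simp: pair_selection_def dset_def)

lemma card_pair_selection: "card (pair_selection k T) = k"
  unfolding pair_selection_def by (subst card_image[OF inj_on_pair_choice]) simp

lemma sum_dset_double_pairs:
  fixes g :: "nat \<Rightarrow> 'a::comm_monoid_add"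
  shows "(\<Sum>a\<in>dset (2*k). g a) = (\<Sum>j<k. g (2*j+1) + g (2*j+2))"
proof (induction k)
  case (Suc k)
  have "dset (2 * Suc k) = insert (2*k+2) (insert (2*k+1) (dset (2*k)))"
    by (auto simp: dset_def)
  then show ?case using Suc by (simp add: dset_def ac_simps)
qed (simp add: dset_def)

lemma sum_pair_selection:
  fixes g :: "nat \<Rightarrow> real"
  shows "(\<Sum>a\<in>pair_selection k T. g a) = (\<Sum>a\<in>dset (2*k). g a) / 2
           + (\<Sum>j<k. if j \<in> T then (g (2*j+2) - g (2*j+1)) / 2 else - ((g (2*j+2) - g (2*j+1)) / 2))"
proof -
  have "(\<Sum>a\<in>pair_selection k T. g a) = (\<Sum>j<k. g (if j \<in> T then 2*j+2 else 2*j+1))"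
    unfolding pair_selection_def by (subst sum.reindex[OF inj_on_pair_choice]) simp
  also have "\<dots> = (\<Sum>j<k. (g (2*j+1) + g (2*j+2)) / 2
      + (if j \<in> T then (g (2*j+2) - g (2*j+1)) / 2 else - ((g (2*j+2) - g (2*j+1)) / 2)))"
    by (intro sum.cong) (auto simp: field_simps)
  finally show ?thesis
    by (simp only: sum.distrib sum_divide_distrib[symmetric] sum_dset_double_pairs)
qed

lemma card_pair_selection_sum_gt_le:
  fixes g :: "nat \<Rightarrow> real"
  assumes k: "k > 0" and \<tau>: "\<tau> > 0" and L: "L > 0"
    and spread: "\<And>a b. a \<in> dset (2*k) \<Longrightarrow> b \<in> dset (2*k) \<Longrightarrow> g a - g b \<le> L"
  shows "real (card {T \<in> Pow {..<k}. (\<Sum>a\<in>dset (2*k). g a) / 2 + \<tau> < (\<Sum>a\<in>pair_selection k T. g a)})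
           \<le> 2^k * exp (- (2 * \<tau>^2 / (k * L^2)))"
proof -
  define c where "c j = (g (2*j+2) - g (2*j+1)) / 2" for j
  have "(c j)^2 \<le> (L/2)^2" if "j < k" for j
  proof -
    have "2*j+1 \<in> dset (2*k)" "2*j+2 \<in> dset (2*k)" using that by (auto simp: dset_def)
    hence "\<bar>c j\<bar> \<le> L/2" using spread by (fastforce simp: c_def abs_le_iff)
    thus ?thesis by (metis abs_ge_zero power2_abs power_mono)
  qed
  hence "(\<Sum>j<k. (c j)^2) \<le> k * (L/2)^2"
    using sum_mono[of "{..<k}" "\<lambda>j. (c j)^2" "\<lambda>_. (L/2)^2"] by simp
  from card_rademacher_sum_gt_le[OF \<tau> _ this] k L
  have "real (card {T \<in> Pow {..<k}. \<tau> < (\<Sum>j<k. if j \<in> T then c j else - c j)})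
          \<le> 2^k * exp (- (\<tau>^2) / (2 * (k * (L/2)^2)))" by simp
  also have "- (\<tau>^2) / (2 * (k * (L/2)^2)) = - (2 * \<tau>^2 / (k * L^2))"
    by (simp add: power2_eq_square field_simps)
  finally show ?thesis unfolding c_def by (simp add: sum_pair_selection)
qed

lemma card_half_subsets_sum_gt_le:
  fixes g :: "nat \<Rightarrow> real"
  assumes k: "k > 0" and \<tau>: "\<tau> > 0" and L: "L > 0"
    and spread: "\<And>a b. a \<in> dset (2*k) \<Longrightarrow> b \<in> dset (2*k) \<Longrightarrow> g a - g b \<le> L"
  shows "real (card {H \<in> half_subsets (2*k). (\<Sum>a\<in>dset (2*k). g a) / 2 + \<tau> < (\<Sum>a\<in>H. g a)})
           \<le> exp (- (2 * \<tau>^2 / (k * L^2))) * real (card (half_subsets (2*k)))"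
proof -
  define D where "D = dset (2*k)"
  define S where "S = half_subsets (2*k)"
  define P where "P = {q. q permutes D}"
  define f where "f H = (of_bool ((\<Sum>a\<in>D. g a) / 2 + \<tau> < (\<Sum>a\<in>H. g a)) :: real)" for H
  define E where "E = exp (- (2 * \<tau>^2 / (k * L^2)))"
  have finD: "finite D" by (simp add: D_def dset_def)
  have finP: "finite P" unfolding P_def using finD by (rule finite_permutations)
  have card_P: "card P > 0" unfolding P_def using card_permutations[OF refl finD] by simp
  have S_eq: "S = {H. H \<subseteq> D \<and> card H = k}" by (simp add: S_def D_def half_subsets_def)
  have per_permutation: "(\<Sum>T\<in>Pow {..<k}. f (q ` pair_selection k T)) \<le> 2^k * E" if "q \<in> P" for q
  proof -
    have q: "q permutes D" using that by (simp add: P_def)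
    have "(\<Sum>a\<in>q ` pair_selection k T. g a) = (\<Sum>a\<in>pair_selection k T. g (q a))" for T
      using permutes_inj[OF q] by (subst sum.reindex) (auto intro: inj_on_subset)
    moreover have "(\<Sum>a\<in>D. g (q a)) = (\<Sum>a\<in>D. g a)"
      using sum.permute[OF q, of g] by (simp add: comp_def)
    moreover have "g (q a) - g (q b) \<le> L" if "a \<in> D" "b \<in> D" for a b
      using spread permutes_in_image[OF q] that by (simp add: D_def)
    ultimately show ?thesis
      using card_pair_selection_sum_gt_le[OF k \<tau> L, of "g \<circ> q"]
      by (simp add: f_def E_def D_def sum.inter_filter[symmetric] of_bool_def)
  qed
  have "real (2^k) * (real (card P) * (\<Sum>H\<in>S. f H))
      = (\<Sum>T\<in>Pow {..<k}. (\<Sum>q\<in>P. f (q ` pair_selection k T)) * real (card S))"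
    using sum_permutes_image[OF finD pair_selection_subset_dset[of k, folded D_def] card_pair_selection, of f]
    by (simp add: S_eq P_def card_Pow)
  also have "\<dots> = (\<Sum>q\<in>P. \<Sum>T\<in>Pow {..<k}. f (q ` pair_selection k T)) * real (card S)"
    by (simp add: sum_distrib_right[symmetric] sum.swap[of _ "Pow {..<k}"])
  also have "\<dots> \<le> (\<Sum>q\<in>P. 2^k * E) * real (card S)"
    by (intro mult_right_mono sum_mono per_permutation) auto
  finally have "(\<Sum>H\<in>S. f H) \<le> E * real (card S)"
    using card_P by (simp add: mult_le_cancel_left_pos)
  moreover have "(\<Sum>H\<in>S. f H) = real (card {H \<in> S. (\<Sum>a\<in>D. g a) / 2 + \<tau> < (\<Sum>a\<in>H. g a)})"
    by (simp add: S_def finite_half_subsets f_def sum.inter_filter[symmetric] of_bool_def)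
  ultimately show ?thesis by (simp add: E_def S_def D_def)
qed

lemma one_add_le_exp_mult_one_minus:
  fixes t :: real assumes "0 \<le> t" "t \<le> 4/5"
  shows "1 + t \<le> exp (4*t) * (1 - t)"
proof -
  have "t * t \<le> 4/5 * t" using mult_right_mono[OF assms(2) assms(1)] .
  hence "0 \<le> t * (2 + 4*t - 8*t^2)"
    using assms by (intro mult_nonneg_nonneg) (auto simp: power2_eq_square)
  hence "1 + t \<le> (1 + 4*t + (4*t)^2 / 2) * (1 - t)"
    by (simp add: algebra_simps power2_eq_square power3_eq_cube)
  also have "\<dots> \<le> exp (4*t) * (1 - t)"
    using exp_lower_Taylor_quadratic[of "4*t"] assms by (intro mult_right_mono) auto
  finally show ?thesis .
qed

lemma sum_gt_half_of_ratio_gt: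
  fixes p :: "'a \<Rightarrow> real"
  assumes D: "finite D" "H \<subseteq> D" "(\<Sum>x\<in>D. p x) \<ge> 0" and t: "0 \<le> t" "t \<le> 4/5"
    and ratio: "exp (4*t) * (\<Sum>x\<in>D - H. p x) < (\<Sum>x\<in>H. p x)"
  shows "(1 + t) * (\<Sum>x\<in>D. p x) / 2 < (\<Sum>x\<in>H. p x)"
proof (rule ccontr)
  \<comment> \<open>\<open>(1 + t) / (1 - t) \<le> exp (4 * t)\<close>: a relative excess of at most \<open>t\<close> over the mean keeps
    the ratio of the two parts below \<open>exp (4 * t)\<close>\<close>
  define s where "s = (\<Sum>x\<in>D. p x)"
  assume "\<not> ?thesis"
  hence le: "(\<Sum>x\<in>H. p x) \<le> (1 + t) * s / 2" by (simp add: s_def)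
  also have "\<dots> \<le> exp (4*t) * (1 - t) * s / 2"
    using one_add_le_exp_mult_one_minus[OF t] D(3) by (intro divide_right_mono mult_right_mono) (auto simp: s_def)
  also have "\<dots> = exp (4*t) * (s - (1 + t) * s / 2)" by (simp add: field_simps)
  also have "\<dots> \<le> exp (4*t) * (s - (\<Sum>x\<in>H. p x))" by (intro mult_left_mono) (use le in auto)
  also have "s - (\<Sum>x\<in>H. p x) = (\<Sum>x\<in>D - H. p x)"
    using sum.subset_diff[OF D(2,1), of p] by (simp add: s_def)
  finally show False using ratio by simp
qed

lemma card_half_subsets_ratio_gt_le:
  fixes p :: "nat \<Rightarrow> real"
  assumes k: "k > 0" and p0: "\<And>x. 0 \<le> p x" and w: "w > 0" and t: "0 < t" "t \<le> 4/5"
    and spread: "\<And>a b. a \<in> dset (2*k) \<Longrightarrow> b \<in> dset (2*k) \<Longrightarrow>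
                   p a - p b \<le> w * ((\<Sum>x\<in>dset (2*k). p x) / (2*k))"
  shows "real (card {H \<in> half_subsets (2*k). exp (4*t) * (\<Sum>x\<in>dset (2*k) - H. p x) < (\<Sum>x\<in>H. p x)})
           \<le> exp (- (2 * t^2 * k / w^2)) * real (card (half_subsets (2*k)))"
proof -
  define D where "D = dset (2*k)"
  define S where "S = half_subsets (2*k)"
  define m where "m = (\<Sum>x\<in>D. p x) / (2*k)"
  have finD: "finite D" by (simp add: D_def dset_def)
  have sum_D: "(\<Sum>x\<in>D. p x) = 2*k*m" using k by (simp add: m_def)
  have HD: "H \<subseteq> D" if "H \<in> S" for H using that by (simp add: S_def D_def half_subsets_def)
  show ?thesis
  proof (cases "m = 0")
    case True
    hence "\<forall>x\<in>D. p x = 0" using sum_D sum_nonneg_eq_0_iff[OF finD] p0 by auto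
    hence "{H \<in> half_subsets (2*k). exp (4*t) * (\<Sum>x\<in>dset (2*k) - H. p x) < (\<Sum>x\<in>H. p x)} = {}"
      using HD by (auto simp: subset_iff S_def D_def)
    then show ?thesis by (simp only: card.empty) simp
  next
    case False
    have "m \<ge> 0" unfolding m_def by (intro divide_nonneg_nonneg sum_nonneg) (auto simp: p0)
    with False have m: "m > 0" by simp
    have spread_m: "p a - p b \<le> w*m" if "a \<in> dset (2*k)" "b \<in> dset (2*k)" for a b
      using spread[OF that] by (simp add: m_def D_def)
    have "(1 + t) * (\<Sum>x\<in>D. p x) / 2 = (\<Sum>x\<in>D. p x) / 2 + t*k*m" by (simp add: sum_D algebra_simps)
    hence "{H \<in> S. exp (4*t) * (\<Sum>x\<in>D - H. p x) < (\<Sum>x\<in>H. p x)}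
            \<subseteq> {H \<in> S. (\<Sum>x\<in>D. p x) / 2 + t*k*m < (\<Sum>x\<in>H. p x)}"
      using sum_gt_half_of_ratio_gt[OF finD HD _ _ t(2), of _ p] sum_D m t by fastforce
    hence "real (card {H \<in> S. exp (4*t) * (\<Sum>x\<in>D - H. p x) < (\<Sum>x\<in>H. p x)})
             \<le> real (card {H \<in> S. (\<Sum>x\<in>D. p x) / 2 + t*k*m < (\<Sum>x\<in>H. p x)})"
      by (simp add: card_mono finite_half_subsets S_def)
    also have "\<dots> \<le> exp (- (2 * (t*k*m)^2 / (k * (w*m)^2))) * real (card S)"
      using card_half_subsets_sum_gt_le[OF k _ _ spread_m, of "t*k*m"] t k m w
      by (simp add: S_def D_def)
    also have "2 * (t*k*m)^2 / (k * (w*m)^2) = 2 * t^2 * k / w^2"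
      using k m by (simp add: power2_eq_square field_simps)
    finally show ?thesis by (simp add: S_def D_def)
  qed
qed

section \<open>Privacy loss and counting\<close>

lemma measure_pmf_prob_le_mult:
  assumes "c \<ge> 0" and "\<And>y. y \<in> A \<Longrightarrow> pmf p y \<le> c * pmf q y"
  shows "measure_pmf.prob p A \<le> c * measure_pmf.prob q A"
proof -
  have "infsetsum (pmf p) A \<le> infsetsum (\<lambda>y. c * pmf q y) A"
    by (rule infsetsum_mono) (auto intro: pmf_abs_summable abs_summable_on_cmult_right assms)
  also have "\<dots> = c * infsetsum (pmf q) A"
    by (rule infsetsum_cmult_right) (rule pmf_abs_summable)
  finally show ?thesis by (simp add: measure_pmf_conv_infsetsum)
qed

definition privacy_loss_exceeds :: "real \<Rightarrow> 'y pmf \<Rightarrow> 'y pmf \<Rightarrow> 'y set" where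
  "privacy_loss_exceeds c p q = {y. exp c * pmf q y < pmf p y}"

lemma prob_le_exp_prob_add_privacy_loss:
  "measure_pmf.prob p Y \<le> exp c * measure_pmf.prob q Y + measure_pmf.prob p (privacy_loss_exceeds c p q)"
proof -
  let ?B = "privacy_loss_exceeds c p q"
  have "measure_pmf.prob p Y \<le> measure_pmf.prob p ((Y - ?B) \<union> ?B)"
    by (rule measure_pmf.finite_measure_mono) auto
  also have "\<dots> \<le> measure_pmf.prob p (Y - ?B) + measure_pmf.prob p ?B"
    by (rule measure_subadditive) (auto simp: measure_pmf.emeasure_finite)
  also have "measure_pmf.prob p (Y - ?B) \<le> exp c * measure_pmf.prob q (Y - ?B)"
    by (rule measure_pmf_prob_le_mult) (auto simp: privacy_loss_exceeds_def not_less)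
  also have "\<dots> \<le> exp c * measure_pmf.prob q Y"
    by (intro mult_left_mono measure_pmf.finite_measure_mono) auto
  finally show ?thesis by simp
qed

lemma pmf_rand_uniform:
  "finite H \<Longrightarrow> H \<noteq> {} \<Longrightarrow> pmf (rand_uniform H R) y = (\<Sum>x\<in>H. pmf (R x) y) / card H"
  by (simp add: rand_uniform_def pmf_bind_pmf_of_set)

lemma measure_rand_uniform_subset_le:
  assumes "finite D" "H \<subseteq> D" "H \<noteq> {}"
  shows "measure_pmf.prob (rand_uniform H R) A \<le> card D / card H * measure_pmf.prob (rand_uniform D R) A"
proof (rule measure_pmf_prob_le_mult)
  fix y
  have fin: "finite H" and "D \<noteq> {}" using assms finite_subset by blast+
  have "(\<Sum>x\<in>H. pmf (R x) y) \<le> (\<Sum>x\<in>D. pmf (R x) y)"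
    using assms by (intro sum_mono2) auto
  thus "pmf (rand_uniform H R) y \<le> card D / card H * pmf (rand_uniform D R) y"
    using assms fin \<open>D \<noteq> {}\<close> by (simp add: pmf_rand_uniform divide_right_mono card_gt_0_iff)
qed simp

lemma card_gt_le_of_sum_le:
  fixes a :: "'a \<Rightarrow> real"
  assumes "finite S" "\<And>x. x \<in> S \<Longrightarrow> a x \<ge> 0" "c > 0" "(\<Sum>x\<in>S. a x) \<le> B"
  shows "real (card {x \<in> S. c < a x}) \<le> B / c"
proof -
  have "real (card {x \<in> S. c < a x}) * c = (\<Sum>x\<in>{x \<in> S. c < a x}. c)" by simp
  also have "\<dots> \<le> (\<Sum>x\<in>{x \<in> S. c < a x}. a x)" by (intro sum_mono) auto
  also have "\<dots> \<le> (\<Sum>x\<in>S. a x)" by (intro sum_mono2) (use assms in auto)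
  also have "\<dots> \<le> B" by (fact assms(4))
  finally show ?thesis using assms by (simp add: le_divide_eq)
qed

lemma sum_measure_le_of_card_le:
  assumes S: "finite S" and c: "\<And>y. real (card {H \<in> S. y \<in> B H}) \<le> c"
  shows "(\<Sum>H\<in>S. measure_pmf.prob M (B H)) \<le> c"
proof -
  have int: "integrable (measure_pmf M) (indicat_real (B H))" for H
    by (simp add: integrable_indicator_iff measure_pmf.emeasure_finite less_top[symmetric])
  have "(\<Sum>H\<in>S. measure_pmf.prob M (B H)) = measure_pmf.expectation M (\<lambda>y. \<Sum>H\<in>S. indicator (B H) y)"
    using int by (simp add: Bochner_Integration.integral_sum[symmetric])
  also have "\<dots> \<le> c"
  proof (rule measure_pmf.integral_le_const)
    show "integrable (measure_pmf M) (\<lambda>y. \<Sum>H\<in>S. indicat_real (B H) y)"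
      using int by (rule Bochner_Integration.integrable_sum)
    have "(\<Sum>H\<in>S. indicat_real (B H) y) = real (card {H \<in> S. y \<in> B H})" for y
      using sum.inter_filter[OF S, of "\<lambda>_. 1::real" "\<lambda>H. y \<in> B H"] by (simp add: indicator_def of_bool_def)
    thus "AE y in measure_pmf M. (\<Sum>H\<in>S. indicat_real (B H) y) \<le> c" using c by simp
  qed
  finally show ?thesis .
qed

lemma measure_pmf_of_set_ge:
  assumes "finite S" "S \<noteq> {}" "real (card {x \<in> S. \<not> P x}) \<le> a * real (card S)"
  shows "measure_pmf.prob (pmf_of_set S) {x. P x} \<ge> 1 - a"
proof -
  have "card S = card ({x \<in> S. P x} \<union> {x \<in> S. \<not> P x})"
    by (rule arg_cong[where f = card]) auto
  also have "\<dots> = card {x \<in> S. P x} + card {x \<in> S. \<not> P x}"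
    by (rule card_Un_disjoint) (use assms(1) in auto)
  finally have "card S = card {x \<in> S. P x} + card {x \<in> S. \<not> P x}" .
  hence "(1 - a) * real (card S) \<le> real (card {x \<in> S. P x})" using assms(3) by (simp add: algebra_simps)
  moreover have "measure_pmf.prob (pmf_of_set S) {x. P x} = real (card {x \<in> S. P x}) / card S"
    using assms by (simp add: measure_pmf_of_set Int_def conj_commute)
  ultimately show ?thesis using assms by (simp add: le_divide_eq card_gt_0_iff)
qed

lemma measure_pmf_of_set_all_ge:
  assumes "finite S" "S \<noteq> {}" "finite I"
    and "\<And>i. i \<in> I \<Longrightarrow> real (card {x \<in> S. \<not> P i x}) \<le> a * real (card S)"
  shows "measure_pmf.prob (pmf_of_set S) {x. \<forall>i\<in>I. P i x} \<ge> 1 - real (card I) * a"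
proof (rule measure_pmf_of_set_ge[OF assms(1,2)])
  have "{x \<in> S. \<not> (\<forall>i\<in>I. P i x)} = (\<Union>i\<in>I. {x \<in> S. \<not> P i x})" by auto
  hence "real (card {x \<in> S. \<not> (\<forall>i\<in>I. P i x)}) \<le> (\<Sum>i\<in>I. real (card {x \<in> S. \<not> P i x}))"
    using card_UN_le[OF assms(3), of "\<lambda>i. {x \<in> S. \<not> P i x}"] by (simp flip: of_nat_sum)
  also have "\<dots> \<le> (\<Sum>i\<in>I. a * real (card S))" by (rule sum_mono) (rule assms(4))
  finally show "real (card {x \<in> S. \<not> (\<forall>i\<in>I. P i x)}) \<le> real (card I) * a * real (card S)" by simp
qed

section \<open>Hiding the input in a uniform half\<close>

lemma private_pmf_spread:
  assumes priv: "private_randomizer X R eps 0" and X: "finite X" "a \<in> X" "b \<in> X"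
  shows "pmf (R a) y - pmf (R b) y \<le> (exp eps - exp (- eps)) * ((\<Sum>x\<in>X. pmf (R x) y) / card X)"
proof -
  have pr: "pmf (R x) y \<le> exp eps * pmf (R x') y" if "x \<in> X" "x' \<in> X" for x x'
    using priv that unfolding private_randomizer_def by (metis add_0_right measure_pmf_single)
  define m where "m = (\<Sum>x\<in>X. pmf (R x) y) / card X"
  have card_X: "card X > 0" using X card_gt_0_iff by blast
  have "(\<Sum>x\<in>X. pmf (R a) y) \<le> (\<Sum>x\<in>X. exp eps * pmf (R x) y)"
    by (intro sum_mono pr) (use X in auto)
  hence "pmf (R a) y \<le> exp eps * m"
    using card_X by (simp add: m_def sum_distrib_left[symmetric] field_simps)
  moreover have "(\<Sum>x\<in>X. pmf (R x) y) \<le> (\<Sum>x\<in>X. exp eps * pmf (R b) y)"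
    by (intro sum_mono pr) (use X in auto)
  hence "exp (- eps) * m \<le> pmf (R b) y"
    using card_X by (simp add: m_def exp_minus field_simps)
  ultimately have "pmf (R a) y - pmf (R b) y \<le> exp eps * m - exp (- eps) * m" by linarith
  thus ?thesis by (simp add: m_def left_diff_distrib diff_divide_distrib)
qed

lemma private_randomizer_Q_rand:
  assumes "c \<ge> 0"
    and HD: "\<And>Y. measure_pmf.prob (rand_uniform H R) Y
              \<le> exp c * measure_pmf.prob (rand_uniform (dset d - H) R) Y + \<delta>"
    and DH: "\<And>Y. measure_pmf.prob (rand_uniform (dset d - H) R) Y
              \<le> exp c * measure_pmf.prob (rand_uniform H R) Y + \<delta>"
  shows "private_randomizer {1, -1} (Q_rand d H R) c \<delta>"
proof -
  have "\<delta> \<ge> 0" using HD[of "{}"] by simp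
  hence "measure_pmf.prob p Y \<le> exp c * measure_pmf.prob p Y + \<delta>" for p :: "'a pmf" and Y
    using assms(1) mult_right_mono[of 1 "exp c" "measure_pmf.prob p Y"] by simp
  then show ?thesis using HD DH by (auto simp: private_randomizer_def Q_rand_def)
qed

lemma sum_measure_privacy_loss_exceeds_le:
  assumes k: "k > 0" and eps: "eps > 0" and priv: "private_randomizer (dset (2*k)) R eps 0"
    and t: "0 < t" "t \<le> 4/5"
  shows "(\<Sum>H\<in>half_subsets (2*k). measure_pmf.prob (rand_uniform (dset (2*k)) R)
            (privacy_loss_exceeds (4*t) (rand_uniform H R) (rand_uniform (dset (2*k) - H) R)))
         \<le> exp (- (2 * t^2 * k / (exp eps - exp (- eps))^2)) * real (card (half_subsets (2*k)))"
proof (rule sum_measure_le_of_card_le[OF finite_half_subsets])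
  fix y
  define D where "D = dset (2*k)"
  define p where "p x = pmf (R x) y" for x
  have w: "exp eps - exp (- eps) > 0" using eps by simp
  have card_D: "card D = 2*k" by (simp add: D_def dset_def)
  have spread: "p a - p b \<le> (exp eps - exp (- eps)) * ((\<Sum>x\<in>D. p x) / (2*k))"
    if "a \<in> D" "b \<in> D" for a b
    using private_pmf_spread[OF priv _ that[unfolded D_def]] card_D by (simp add: p_def D_def dset_def)
  have "y \<in> privacy_loss_exceeds (4*t) (rand_uniform H R) (rand_uniform (D - H) R)
          \<longleftrightarrow> exp (4*t) * (\<Sum>x\<in>D - H. p x) < (\<Sum>x\<in>H. p x)"
    if "H \<in> half_subsets (2*k)" for H
  proof -
    have H: "H \<subseteq> D" "card H = k" using that by (simp_all add: half_subsets_def D_def)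
    moreover have "finite D" by (simp add: D_def dset_def)
    ultimately have "finite H" "H \<noteq> {}" "finite (D - H)" "card (D - H) = k" "D - H \<noteq> {}"
      using k card_D by (auto simp: card_Diff_subset finite_subset)
    thus ?thesis using H(2) k
      by (simp add: privacy_loss_exceeds_def pmf_rand_uniform p_def field_simps)
  qed
  hence "{H \<in> half_subsets (2*k). y \<in> privacy_loss_exceeds (4*t) (rand_uniform H R) (rand_uniform (D - H) R)}
      = {H \<in> half_subsets (2*k). exp (4*t) * (\<Sum>x\<in>D - H. p x) < (\<Sum>x\<in>H. p x)}"
    by auto
  with card_half_subsets_ratio_gt_le[OF k _ w t spread[unfolded D_def]]
  show "real (card {H \<in> half_subsets (2*k).
      y \<in> privacy_loss_exceeds (4*t) (rand_uniform H R) (rand_uniform (dset (2*k) - H) R)})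
    \<le> exp (- (2 * t^2 * k / (exp eps - exp (- eps))^2)) * real (card (half_subsets (2*k)))"
    by (simp add: p_def D_def)
qed

lemma measure_rand_uniform_half_le:
  assumes "k > 0" "H \<in> half_subsets (2*k)"
  shows "measure_pmf.prob (rand_uniform H R) A \<le> 2 * measure_pmf.prob (rand_uniform (dset (2*k)) R) A"
proof -
  have "H \<subseteq> dset (2*k)" "card H = k" using assms(2) by (simp_all add: half_subsets_def)
  moreover have "finite (dset (2*k))" "card (dset (2*k)) = 2*k" by (simp_all add: dset_def)
  ultimately show ?thesis
    using measure_rand_uniform_subset_le[of "dset (2*k)" H R A] assms(1) by (auto simp: card_gt_0_iff)
qed

lemma private_Q_rand_of_privacy_loss_le:
  fixes R :: "nat \<Rightarrow> 'y::countable pmf"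
  assumes k: "k > 0" and H: "H \<in> half_subsets (2*k)" and c: "c \<ge> 0"
  defines "P \<equiv> rand_uniform H R" and "P' \<equiv> rand_uniform (dset (2*k) - H) R"
    and "M \<equiv> rand_uniform (dset (2*k)) R"
  assumes loss: "2 * measure_pmf.prob M (privacy_loss_exceeds c P P') \<le> \<delta>"
    and loss': "2 * measure_pmf.prob M (privacy_loss_exceeds c P' P) \<le> \<delta>"
  shows "private_randomizer {1, -1} (Q_rand (2*k) H R) c \<delta>"
proof (rule private_randomizer_Q_rand[where d = "2*k" and H = H and R = R, OF c, folded P_def P'_def])
  have "dset (2*k) - H \<in> half_subsets (2*k)" using H half_subsets_Diff by simp
  fix Y
  show "measure_pmf.prob P Y \<le> exp c * measure_pmf.prob P' Y + \<delta>"
    using prob_le_exp_prob_add_privacy_loss[of P Y c P']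
      measure_rand_uniform_half_le[OF k H, of R "privacy_loss_exceeds c P P'", folded P_def M_def]
      loss by linarith
  show "measure_pmf.prob P' Y \<le> exp c * measure_pmf.prob P Y + \<delta>"
    using prob_le_exp_prob_add_privacy_loss[of P' Y c P]
      measure_rand_uniform_half_le[OF k \<open>dset (2*k) - H \<in> half_subsets (2*k)\<close>, of R
        "privacy_loss_exceeds c P' P", folded P'_def M_def]
      loss' by linarith
qed

lemma card_not_private_Q_rand_le:
  assumes k: "k > 0" and eps: "eps > 0" and priv: "private_randomizer (dset (2*k)) R eps 0"
    and t: "0 < t" "t \<le> 4/5" and \<delta>: "\<delta> > 0"
  shows "real (card {H \<in> half_subsets (2*k). \<not> private_randomizer {1, -1} (Q_rand (2*k) H R) (4*t) \<delta>})
           \<le> 4 * exp (- (2 * t^2 * k / (exp eps - exp (- eps))^2)) / \<delta> * real (card (half_subsets (2*k)))"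
proof -
  define D where "D = dset (2*k)"
  define S where "S = half_subsets (2*k)"
  define M where "M = rand_uniform D R"
  define q where "q = exp (- (2 * t^2 * k / (exp eps - exp (- eps))^2))"
  define \<Lambda> where "\<Lambda> H = privacy_loss_exceeds (4*t) (rand_uniform H R) (rand_uniform (D - H) R)" for H
  have bij: "bij_betw (\<lambda>H. D - H) S S"
    unfolding D_def S_def by (rule bij_betw_Diff_half_subsets) simp
  have sum_\<Lambda>: "(\<Sum>H\<in>S. measure_pmf.prob M (\<Lambda> H)) \<le> q * card S"
    using sum_measure_privacy_loss_exceeds_le[OF k eps priv t]
    by (simp add: S_def M_def \<Lambda>_def D_def q_def)
  have sum_\<Lambda>_Diff: "(\<Sum>H\<in>S. measure_pmf.prob M (\<Lambda> (D - H))) \<le> q * card S"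
    using sum_\<Lambda> sum.reindex_bij_betw[OF bij, of "\<lambda>H. measure_pmf.prob M (\<Lambda> H)"] by simp
  have Q_private: "private_randomizer {1, -1} (Q_rand (2*k) H R) (4*t) \<delta>"
    if H: "H \<in> S" and "2 * measure_pmf.prob M (\<Lambda> H) \<le> \<delta>" "2 * measure_pmf.prob M (\<Lambda> (D - H)) \<le> \<delta>"
    for H
  proof -
    have "D - (D - H) = H" using H by (auto simp: S_def D_def half_subsets_def)
    thus ?thesis using private_Q_rand_of_privacy_loss_le[of k H "4*t" R \<delta>] k H t that(2,3)
      by (simp add: S_def D_def M_def \<Lambda>_def)
  qed
  define A where "A f = {H \<in> S. \<delta>/2 < measure_pmf.prob M (\<Lambda> (f H))}" for f :: "nat set \<Rightarrow> nat set"
  have card_A: "real (card (A f)) \<le> q * card S / (\<delta>/2)"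
    if "(\<Sum>H\<in>S. measure_pmf.prob M (\<Lambda> (f H))) \<le> q * card S" for f
    unfolding A_def using that \<delta> by (intro card_gt_le_of_sum_le) (auto simp: S_def finite_half_subsets)
  have "{H \<in> S. \<not> private_randomizer {1, -1} (Q_rand (2*k) H R) (4*t) \<delta>} \<subseteq> A id \<union> A (\<lambda>H. D - H)"
    using Q_private by (fastforce simp: A_def)
  hence "card {H \<in> S. \<not> private_randomizer {1, -1} (Q_rand (2*k) H R) (4*t) \<delta>}
           \<le> card (A id \<union> A (\<lambda>H. D - H))"
    by (intro card_mono) (simp_all add: A_def S_def finite_half_subsets)
  also have "\<dots> \<le> card (A id) + card (A (\<lambda>H. D - H))" by (rule card_Un_le)
  finally have "real (card {H \<in> S. \<not> private_randomizer {1, -1} (Q_rand (2*k) H R) (4*t) \<delta>})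
                  \<le> q * card S / (\<delta>/2) + q * card S / (\<delta>/2)"
    using card_A[of id] card_A[of "\<lambda>H. D - H"] sum_\<Lambda> sum_\<Lambda>_Diff by simp
  thus ?thesis by (simp add: S_def q_def mult_ac)
qed

lemma privacy_amplification_parameters:
  fixes eps delta t :: real and d n :: nat
  assumes eps: "eps > 0" and delta: "0 < delta" "delta < 1" and n: "n \<ge> 1"
    and d: "real d > 4 * (exp (2 * eps) - 1)^2 * ln (12 * exp eps * real n / delta)"
  defines "t \<equiv> (exp (2 * eps) - 1) * sqrt (ln (24 * exp eps * real n / delta) / real d)"
  shows "d > 0" and "0 < t" and "t \<le> 4/5"
    and "(exp (2 * eps) - 1) * sqrt (16 / real d * ln (24 * exp eps * real n / delta)) = 4 * t"
proof -
  define u where "u = exp (2 * eps) - 1"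
  define M where "M = ln (12 * exp eps * real n / delta)"
  define L where "L = ln (24 * exp eps * real n / delta)"
  have u: "u > 0" using eps by (simp add: u_def)
  have "12 * exp eps * real n / delta \<ge> 12 * exp eps * real n"
    using delta eps n by (simp add: le_divide_eq mult_left_le)
  moreover have "1 * 1 \<le> exp eps * real n" using eps n by (intro mult_mono) auto
  ultimately have big: "12 * exp eps * real n / delta \<ge> 2" by linarith
  hence M: "M \<ge> ln 2" by (simp add: M_def)
  hence M_pos: "M > 0" using ln_gt_zero[of 2] by linarith
  have "L = ln (2 * (12 * exp eps * real n / delta))" by (simp add: L_def mult.assoc)
  also have "\<dots> = ln 2 + M" using big n by (subst ln_mult) (auto simp: M_def)
  finally have LM: "L = ln 2 + M" .
  have d': "4 * u^2 * M < real d" using d by (simp add: u_def M_def)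
  moreover have "0 < 4 * u^2 * M" using u M_pos by simp
  ultimately have "real d > 0" by linarith
  thus d_pos: "d > 0" by simp
  have L_pos: "L > 0" using LM M_pos ln_gt_zero[of 2] by linarith
  have t: "t = u * sqrt (L / d)" by (simp add: t_def u_def L_def)
  show "0 < t" using u L_pos d_pos by (simp add: t)
  have "t^2 = u^2 * L / d" using L_pos by (simp add: t power_mult_distrib)
  also have "\<dots> \<le> u^2 * (2 * M) / d"
    using LM M u by (intro divide_right_mono mult_left_mono) auto
  also have "\<dots> < u^2 * (2 * M) / (4 * u^2 * M)"
    using d' d_pos u M_pos by (intro divide_strict_left_mono) auto
  also have "\<dots> = 1/2" using u M_pos by (simp add: field_simps power2_eq_square)
  finally have "t^2 < (4/5)^2" by (simp add: power2_eq_square)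
  thus "t \<le> 4/5" using power_less_imp_less_base[of t 2 "4/5"] by simp
  have "sqrt (16 / real d * L) = sqrt (4^2 * (L / d))" by simp
  also have "\<dots> = 4 * sqrt (L / d)" by (simp only: real_sqrt_mult real_sqrt_abs)
  finally show "(exp (2 * eps) - 1) * sqrt (16 / real d * ln (24 * exp eps * real n / delta)) = 4 * t"
    by (simp add: t u_def L_def)
qed

lemma privacy_amplification_failure_le:
  fixes eps delta t :: real and d n :: nat
  assumes eps: "eps > 0" and delta: "0 < delta" "delta < 1" and n: "n \<ge> 1" and d: "d > 0"
  defines "t \<equiv> (exp (2 * eps) - 1) * sqrt (ln (24 * exp eps * real n / delta) / real d)"
  shows "4 * exp (- (t^2 * d / (exp eps - exp (- eps))^2)) / delta \<le> 1 / (6 * n)"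
proof -
  define w where "w = exp eps - exp (- eps)"
  define L where "L = ln (24 * exp eps * real n / delta)"
  have w: "w > 0" using eps by (simp add: w_def)
  have "1 * 1 \<le> exp eps * real n" using eps n by (intro mult_mono) auto
  moreover have "24 * exp eps * real n \<le> 24 * exp eps * real n / delta"
    using delta eps n by (simp add: le_divide_eq mult_left_le)
  ultimately have L_pos: "L > 0" unfolding L_def by (intro ln_gt_zero) linarith
  have "L \<le> exp eps ^ 2 * L" using L_pos eps by (simp add: mult_le_cancel_right1)
  also have "exp eps ^ 2 * L = t^2 * d / w^2"
  proof -
    define u where "u = exp (2 * eps) - 1"
    have t2: "t^2 = u^2 * L / d" using L_pos by (simp add: t_def u_def L_def power_mult_distrib)
    have "u = exp eps * w" by (simp add: u_def w_def algebra_simps exp_minus field_simps flip: exp_add)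
    thus ?thesis using d w unfolding t2 by (simp add: field_simps power2_eq_square)
  qed
  finally have "exp (- (t^2 * d / w^2)) \<le> exp (- L)" by simp
  also have "exp (- L) = delta / (24 * exp eps * real n)"
    using delta n by (simp add: L_def exp_minus exp_ln)
  also have "\<dots> \<le> delta / (24 * real n)"
    using delta n eps by (intro divide_left_mono) auto
  finally show ?thesis using delta n by (simp add: w_def field_simps)
qed

theorem mainTheorem9:
  fixes eps delta :: real and d n :: nat
    and R :: "nat \<Rightarrow> nat \<Rightarrow> 'y::countable pmf"
  assumes "eps > 0" and "0 < delta" and "delta < 1" and "n \<ge> 1"
    and "even d"
    and "real d > 4 * (exp (2 * eps) - 1)^2 * ln (12 * exp eps * real n / delta)"
    and "\<forall>i\<in>{1..n}. private_randomizer (dset d) (R i) eps 0"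
  shows "measure_pmf.prob (pmf_of_set (half_subsets d))
           {H. \<forall>i\<in>{1..n}. private_randomizer {1, -1} (Q_rand d H (R i))
                 ((exp (2 * eps) - 1) * sqrt (16 / real d * ln (24 * exp eps * real n / delta)))
                 delta} > 2 / 3"
proof -
  define t where "t = (exp (2 * eps) - 1) * sqrt (ln (24 * exp eps * real n / delta) / real d)"
  note bounds = privacy_amplification_parameters[OF assms(1-4,6), folded t_def]
  have failure: "4 * exp (- (t^2 * d / (exp eps - exp (- eps))^2)) / delta \<le> 1 / (6 * n)"
    using privacy_amplification_failure_le[OF assms(1-4) bounds(1)] by (simp add: t_def)
  obtain k where d2k: "d = 2*k" using \<open>even d\<close> by (auto elim: evenE)
  have card_bad: "real (card {H \<in> half_subsets d. \<not> private_randomizer {1, -1} (Q_rand d H (R i)) (4*t) delta})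
          \<le> 1 / (6 * n) * real (card (half_subsets d))" if "i \<in> {1..n}" for i
  proof -
    have "real (card {H \<in> half_subsets d. \<not> private_randomizer {1, -1} (Q_rand d H (R i)) (4*t) delta})
          \<le> 4 * exp (- (t^2 * d / (exp eps - exp (- eps))^2)) / delta * card (half_subsets d)"
      using card_not_private_Q_rand_le[of k eps "R i" t delta] assms(1,2,7) bounds that
      by (simp add: d2k mult_ac)
    also have "\<dots> \<le> 1 / (6 * n) * card (half_subsets d)" using failure by (intro mult_right_mono) auto
    finally show ?thesis .
  qed
  have "measure_pmf.prob (pmf_of_set (half_subsets d))
      {H. \<forall>i\<in>{1..n}. private_randomizer {1, -1} (Q_rand d H (R i)) (4*t) delta}
        \<ge> 1 - real (card {1..n}) * (1 / (6 * n))"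
    by (rule measure_pmf_of_set_all_ge[OF finite_half_subsets _ finite_atLeastAtMost card_bad])
       (use card_half_subsets_pos[of d] in auto)
  hence "5/6 \<le> measure_pmf.prob (pmf_of_set (half_subsets d))
      {H. \<forall>i\<in>{1..n}. private_randomizer {1, -1} (Q_rand d H (R i)) (4*t) delta}"
    using assms(4) by simp
  thus ?thesis unfolding bounds(4) by (rule less_le_trans[rotated]) simp
qed

end
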